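(* Let $X$ be a $0$-dimensional, $\mathbb N$-compact space of non-measurable cardinality. Every continuous character $\chi:C_p(X,\mathbb Z)\to\mathbb T$ extends to a continuous character $\tilde\chi:C_p(X,\mathbb R)\to\mathbb T$, i.e. $\tilde\chi|_{C_p(X,\mathbb Z)}=\chi$.
   Context: Spaces are Tikhonov; $0$-dimensional means having a base of clopen sets; $\mathbb N$-compact means homeomorphic to a closed subspace of a product of copies of the discrete space $\mathbb N$. $C_p(X,\mathbb Z)$ (resp. $C_p(X,\mathbb R)$) is the group of continuous functions $X\to\mathbb Z$ with $\mathbb Z$ discrete (resp. $X\to\mathbb R$) with pointwise addition and the topology of pointwise convergence. $\mathbb T$ is the unit circle group, and a character is a continuous homomorphism into $\mathbb T$. *)

theory Defs
  imports "HOL-Analysis.Analysis"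
begin

definition tikhonov_space :: "'a topology \<Rightarrow> bool" where
  "tikhonov_space X \<longleftrightarrow> completely_regular_space X \<and> Hausdorff_space X"

definition zero_dimensional :: "'a topology \<Rightarrow> bool" where
  "zero_dimensional X \<longleftrightarrow>
     (\<forall>U x. openin X U \<and> x \<in> U \<longrightarrow>
        (\<exists>V. openin X V \<and> closedin X V \<and> x \<in> V \<and> V \<subseteq> U))"

definition N_compact_idx :: "'a topology \<Rightarrow> 'i set \<Rightarrow> bool" where
  "N_compact_idx X I \<longleftrightarrow>
     (\<exists>S. closedin (product_topology (\<lambda>_. discrete_topology (UNIV::nat set)) I) S \<and>
          X homeomorphic_space
            subtopology (product_topology (\<lambda>_. discrete_topology (UNIV::nat set)) I) S)"

definition countably_complete_ultrafilter :: "'a set \<Rightarrow> 'a set set \<Rightarrow> bool" where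
  "countably_complete_ultrafilter S U \<longleftrightarrow>
     U \<subseteq> Pow S \<and> S \<in> U \<and> {} \<notin> U \<and>
     (\<forall>A B. A \<in> U \<and> A \<subseteq> B \<and> B \<subseteq> S \<longrightarrow> B \<in> U) \<and>
     (\<forall>A. A \<subseteq> S \<longrightarrow> A \<in> U \<or> S - A \<in> U) \<and>
     (\<forall>F::nat \<Rightarrow> 'a set. range F \<subseteq> U \<longrightarrow> \<Inter>(range F) \<in> U)"

definition nonmeasurable_card :: "'a set \<Rightarrow> bool" where
  "nonmeasurable_card S \<longleftrightarrow>
     (\<forall>U. countably_complete_ultrafilter S U \<longrightarrow> (\<exists>x\<in>S. U = {A. A \<subseteq> S \<and> x \<in> A}))"

definition Cp_int :: "'a topology \<Rightarrow> ('a \<Rightarrow> int) topology" where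
  "Cp_int X = subtopology (product_topology (\<lambda>_. discrete_topology (UNIV::int set)) (topspace X))
                 {f. continuous_map X (discrete_topology UNIV) f \<and> f \<in> extensional (topspace X)}"

definition Cp_real :: "'a topology \<Rightarrow> ('a \<Rightarrow> real) topology" where
  "Cp_real X = subtopology (product_topology (\<lambda>_. euclideanreal) (topspace X))
                 {f. continuous_map X euclideanreal f \<and> f \<in> extensional (topspace X)}"

definition is_character :: "('a \<Rightarrow> 'r::ab_group_add) topology \<Rightarrow> (('a \<Rightarrow> 'r) \<Rightarrow> complex) \<Rightarrow> bool" where
  "is_character G c \<longleftrightarrow>
     continuous_map G (top_of_set (sphere 0 1)) c \<and>
     (\<forall>f\<in>topspace G. \<forall>g\<in>topspace G. c (\<lambda>x. f x + g x) = c f * c g)"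

end

theory Submission
  imports Defs
begin

text \<open>The basic neighbourhood of 0 in \<open>C\<^sub>p(X,\<int>)\<close> consisting of the maps vanishing on a finite
  set \<open>F\<close> is a subgroup; continuity maps it into a small ball around 1, and since the circle has
  no small subgroups the character is trivial on it, i.e. it only depends on the values at \<open>F\<close>.
  Zero-dimensionality supplies integer-valued clopen indicators isolating the points of \<open>F\<close>,
  whence \<open>\<chi>(f) = exp (i \<Sum>x\<in>F. \<theta>\<^sub>x f(x))\<close>; the same formula defines a continuous character of
  \<open>C\<^sub>p(X,\<real>)\<close>.\<close>

lemma norm_square_minus_one_ge:
  fixes w :: "'a::real_normed_field"
  assumes "norm (w - 1) < 1/2"
  shows "3/2 * norm (w - 1) \<le> norm (w\<^sup>2 - 1)"
proof -
  have "2 = norm ((w + 1) - (w - 1))" by simp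
  also have "\<dots> \<le> norm (w + 1) + norm (w - 1)" by (rule norm_triangle_ineq4)
  finally have "3/2 \<le> norm (w + 1)" using assms by linarith
  then have "3/2 * norm (w - 1) \<le> norm (w + 1) * norm (w - 1)" by (rule mult_right_mono) simp
  also have "\<dots> = norm (w\<^sup>2 - 1)"
    by (simp add: power2_eq_square algebra_simps flip: norm_mult)
  finally show ?thesis .
qed

lemma eq_one_if_powers_near_one:
  fixes w :: "'a::real_normed_field"
  assumes near: "\<And>n. norm (w ^ n - 1) < 1/2"
  shows "w = 1"
proof (rule ccontr)
  assume "w \<noteq> 1"
  have grow: "(3/2) ^ k * norm (w - 1) \<le> norm (w ^ (2 ^ k) - 1)" for k
  proof (induction k)
    case (Suc k)
    have "(3/2) ^ Suc k * norm (w - 1) \<le> 3/2 * norm (w ^ (2 ^ k) - 1)"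
      using Suc by (simp add: mult_ac)
    also have "\<dots> \<le> norm ((w ^ (2 ^ k))\<^sup>2 - 1)" by (rule norm_square_minus_one_ge[OF near])
    finally show ?case by (simp add: power_mult[symmetric] mult.commute)
  qed simp
  obtain k where "1 / norm (w - 1) < (3/2::real) ^ k"
    using real_arch_pow[of "3/2" "1 / norm (w - 1)"] by auto
  then have "1 < (3/2) ^ k * norm (w - 1)" using \<open>w \<noteq> 1\<close> by (simp add: field_simps)
  with grow[of k] near[of "2 ^ k"] show False by linarith
qed

lemma continuous_map_discrete_combine:
  assumes "continuous_map X (discrete_topology UNIV) f"
    and "continuous_map X (discrete_topology UNIV) g"
  shows "continuous_map X (discrete_topology UNIV) (\<lambda>x. h (f x) (g x))"
proof -
  have "continuous_map X (prod_topology (discrete_topology UNIV) (discrete_topology UNIV))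
          (\<lambda>x. (f x, g x))"
    using assms by (simp add: continuous_map_paired)
  then have "continuous_map X (discrete_topology (UNIV \<times> UNIV)) (\<lambda>x. (f x, g x))"
    by (simp only: prod_topology_discrete_topology)
  then show ?thesis
    using continuous_map_compose[of X _ "\<lambda>x. (f x, g x)" _ "case_prod h"] by (simp add: o_def)
qed

lemma continuous_map_discrete_comp:
  assumes "continuous_map X (discrete_topology UNIV) f"
  shows "continuous_map X (discrete_topology UNIV) (\<lambda>x. h (f x))"
  using continuous_map_discrete_combine[OF assms assms, of "\<lambda>a _. h a"] .

lemma continuous_map_discrete_sum:
  fixes f :: "'i \<Rightarrow> 'a \<Rightarrow> 'b::comm_monoid_add"
  assumes "finite I" "\<And>i. i \<in> I \<Longrightarrow> continuous_map X (discrete_topology UNIV) (f i)"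
  shows "continuous_map X (discrete_topology UNIV) (\<lambda>x. \<Sum>i\<in>I. f i x)"
  using assms
proof (induction I rule: finite_induct)
  case (insert i I)
  then show ?case
    using continuous_map_discrete_combine[of X "f i" "\<lambda>x. \<Sum>i\<in>I. f i x" "(+)"] by simp
qed simp

lemma continuous_map_discrete_if_clopen:
  assumes "openin X V" "closedin X V"
  shows "continuous_map X (discrete_topology UNIV) (\<lambda>x. if x \<in> V then a else b)"
proof (rule continuous_map_cases)
  show "a = b" if "x \<in> X frontier_of {x. x \<in> V}" for x
    using that assms clopenin_eq_frontier_of[of X V] by simp
qed simp_all

lemma zero_dimensional_clopen_isolating:
  assumes "zero_dimensional X" "t1_space X" "finite F" "x \<in> topspace X"
  obtains V where "openin X V" "closedin X V" "x \<in> V" "V \<inter> F \<subseteq> {x}"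
proof -
  have "closedin X (topspace X \<inter> F - {x})"
    by (rule t1_space_closedin_finite[THEN iffD1, rule_format]) (use assms(2,3) in auto)
  then have "openin X (topspace X - (topspace X \<inter> F - {x}))" by (simp add: openin_diff)
  moreover have "x \<in> topspace X - (topspace X \<inter> F - {x})" using assms(4) by blast
  ultimately obtain V where "openin X V" "closedin X V" "x \<in> V"
      and "V \<subseteq> topspace X - (topspace X \<inter> F - {x})"
    using assms(1) unfolding zero_dimensional_def by blast
  then show ?thesis using that by blast
qed

lemma zero_dimensional_isolating_indicators:
  assumes "zero_dimensional X" "t1_space X" "finite F" "F \<subseteq> topspace X"
  obtains e :: "'a \<Rightarrow> 'a \<Rightarrow> int"
  where "\<And>x. x \<in> F \<Longrightarrow> continuous_map X (discrete_topology UNIV) (e x)"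
    and "\<And>x. x \<in> F \<Longrightarrow> e x x = 1"
    and "\<And>x y. x \<in> F \<Longrightarrow> y \<in> F \<Longrightarrow> y \<noteq> x \<Longrightarrow> e x y = 0"
proof -
  have "\<forall>x\<in>F. \<exists>e. continuous_map X (discrete_topology UNIV) e \<and> e x = (1::int) \<and>
      (\<forall>y\<in>F. y \<noteq> x \<longrightarrow> e y = 0)"
  proof
    fix x assume "x \<in> F"
    then have "x \<in> topspace X" using assms(4) by blast
    then obtain V where "openin X V" "closedin X V" "x \<in> V" "V \<inter> F \<subseteq> {x}"
      by (rule zero_dimensional_clopen_isolating[OF assms(1-3)])
    then show "\<exists>e. continuous_map X (discrete_topology UNIV) e \<and> e x = (1::int) \<and>
        (\<forall>y\<in>F. y \<noteq> x \<longrightarrow> e y = 0)"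
      by (intro exI[of _ "\<lambda>y. if y \<in> V then 1 else 0"])
         (auto intro: continuous_map_discrete_if_clopen)
  qed
  then show thesis using that by (metis (no_types, lifting) bchoice)
qed

lemma topspace_Cp_int:
  "topspace (Cp_int X) =
     {f. continuous_map X (discrete_topology UNIV) f \<and> f \<in> extensional (topspace X)}"
  unfolding Cp_int_def by (auto simp: PiE_def)

lemma topspace_Cp_real:
  "topspace (Cp_real X) = {f. continuous_map X euclideanreal f \<and> f \<in> extensional (topspace X)}"
  unfolding Cp_real_def by (auto simp: PiE_def)

lemma restrict_in_topspace_Cp_int:
  assumes "continuous_map X (discrete_topology UNIV) \<phi>"
  shows "restrict \<phi> (topspace X) \<in> topspace (Cp_int X)"
  using assms by (auto simp: topspace_Cp_int intro: continuous_map_eq)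

lemma openin_Cp_int_agree_on_finite:
  assumes "openin (Cp_int X) U" "f \<in> U"
  obtains F where "finite F" "F \<subseteq> topspace X"
    "\<And>g. g \<in> topspace (Cp_int X) \<Longrightarrow> \<forall>x\<in>F. g x = f x \<Longrightarrow> g \<in> U"
proof -
  let ?P = "product_topology (\<lambda>_. discrete_topology (UNIV::int set)) (topspace X)"
  obtain U' where "openin ?P U'" and U: "U = U' \<inter> topspace (Cp_int X)"
    using assms(1) unfolding topspace_Cp_int unfolding Cp_int_def openin_subtopology by blast
  then obtain W where fin: "finite {i \<in> topspace X. W i \<noteq> UNIV}"
    and f: "f \<in> Pi\<^sub>E (topspace X) W" and WU': "Pi\<^sub>E (topspace X) W \<subseteq> U'"
    using assms(2) unfolding openin_product_topology_alt by force
  show thesis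
  proof (rule that[OF fin])
    fix g assume g: "g \<in> topspace (Cp_int X)" "\<forall>x\<in>{i \<in> topspace X. W i \<noteq> UNIV}. g x = f x"
    then have "g \<in> Pi\<^sub>E (topspace X) W" using f by (auto simp: topspace_Cp_int PiE_iff)
    then show "g \<in> U" using g WU' U by blast
  qed auto
qed

lemma continuous_map_Cp_real_eval: "continuous_map (Cp_real X) euclideanreal (\<lambda>g. g x)"
proof (cases "x \<in> topspace X")
  case True
  then show ?thesis unfolding Cp_real_def
    by (intro continuous_map_from_subtopology continuous_map_product_projection)
next
  case False
  have "continuous_map (Cp_real X) euclideanreal (\<lambda>_. undefined)" by simp
  then show ?thesis
    by (rule continuous_map_eq) (use False in \<open>auto simp: topspace_Cp_real extensional_def\<close>)
qed

lemma is_character_Cp_real_exp_sum: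
  assumes "finite F"
  shows "is_character (Cp_real X) (\<lambda>g. exp (\<i> * of_real (\<Sum>x\<in>F. \<theta> x * g x)))"
  unfolding is_character_def
proof
  have "continuous_map (Cp_real X) euclideanreal (\<lambda>g. \<Sum>x\<in>F. \<theta> x * g x)"
    using assms by (intro continuous_map_sum continuous_map_real_mult_left
        continuous_map_Cp_real_eval)
  then have "continuous_map (Cp_real X) euclidean (\<lambda>g. exp (\<i> * of_real (\<Sum>x\<in>F. \<theta> x * g x)))"
    by (rule continuous_map_compose[of _ euclideanreal _ euclidean "\<lambda>r. exp (\<i> * of_real r)",
          unfolded o_def]) (simp_all add: continuous_on_exp continuous_intros)
  then show "continuous_map (Cp_real X) (top_of_set (sphere 0 1))
      (\<lambda>g. exp (\<i> * of_real (\<Sum>x\<in>F. \<theta> x * g x)))"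
    by (simp add: continuous_map_into_subtopology)
qed (simp add: algebra_simps sum.distrib flip: exp_add)

locale Cp_int_character =
  fixes X :: "'a topology" and chi :: "('a \<Rightarrow> int) \<Rightarrow> complex"
  assumes is_character: "is_character (Cp_int X) chi"
begin

lemma norm_chi: "f \<in> topspace (Cp_int X) \<Longrightarrow> norm (chi f) = 1"
  using is_character unfolding is_character_def continuous_map_def by auto

lemma chi_add:
  "f \<in> topspace (Cp_int X) \<Longrightarrow> g \<in> topspace (Cp_int X) \<Longrightarrow> chi (\<lambda>x. f x + g x) = chi f * chi g"
  using is_character unfolding is_character_def by blast

text \<open>Elements of \<^term>\<open>Cp_int X\<close> take the junk value \<^term>\<open>undefined\<close> outside
  \<^term>\<open>topspace X\<close>, so the pointwise sum of two of them may leave the space and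
  \<^term>\<open>chi\<close> need not send its zero element to 1. Dividing by that value turns
  \<^term>\<open>chi\<close> into a genuine homomorphism on all continuous integer-valued maps.\<close>

definition chi_zero :: complex where
  "chi_zero = chi (restrict (\<lambda>_. 0) (topspace X))"

definition normalized :: "('a \<Rightarrow> int) \<Rightarrow> complex" where
  "normalized \<phi> = chi (restrict \<phi> (topspace X)) / chi_zero"

lemma norm_chi_zero: "norm chi_zero = 1"
  unfolding chi_zero_def by (simp add: norm_chi restrict_in_topspace_Cp_int)

lemma norm_normalized:
  "continuous_map X (discrete_topology UNIV) \<phi> \<Longrightarrow> norm (normalized \<phi>) = 1"
  unfolding normalized_def by (simp add: norm_divide norm_chi_zero norm_chi restrict_in_topspace_Cp_int)

lemma normalized_add:
  assumes "continuous_map X (discrete_topology UNIV) \<phi>" "continuous_map X (discrete_topology UNIV) \<psi>"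
  shows "normalized (\<lambda>x. \<phi> x + \<psi> x) = normalized \<phi> * normalized \<psi>"
proof -
  let ?r = "\<lambda>\<phi>. restrict \<phi> (topspace X)"
  have sum: "continuous_map X (discrete_topology UNIV) (\<lambda>x. \<phi> x + \<psi> x)"
    using assms by (rule continuous_map_discrete_combine)
  have "chi (?r \<phi>) * chi (?r \<psi>) = chi (\<lambda>x. ?r \<phi> x + ?r \<psi> x)"
    using assms by (intro chi_add[symmetric] restrict_in_topspace_Cp_int)
  also have "(\<lambda>x. ?r \<phi> x + ?r \<psi> x) = (\<lambda>x. ?r (\<lambda>x. \<phi> x + \<psi> x) x + ?r (\<lambda>_. 0) x)"
    by auto
  also have "chi \<dots> = chi (?r (\<lambda>x. \<phi> x + \<psi> x)) * chi_zero"
    unfolding chi_zero_def using sum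
    by (intro chi_add restrict_in_topspace_Cp_int continuous_map_const[THEN iffD2]) simp_all
  finally have "chi (?r \<phi>) * chi (?r \<psi>) = chi (?r (\<lambda>x. \<phi> x + \<psi> x)) * chi_zero" .
  with norm_chi_zero show ?thesis unfolding normalized_def by (auto simp: field_simps)
qed

lemma normalized_zero: "normalized (\<lambda>_. 0) = 1"
  using norm_chi_zero unfolding normalized_def chi_zero_def by auto

lemma normalized_of_nat_mult:
  assumes "continuous_map X (discrete_topology UNIV) \<phi>"
  shows "normalized (\<lambda>x. int n * \<phi> x) = normalized \<phi> ^ n"
proof (induction n)
  case (Suc n)
  have "(\<lambda>x. int (Suc n) * \<phi> x) = (\<lambda>x. int n * \<phi> x + \<phi> x)" by (simp add: algebra_simps)
  moreover have "continuous_map X (discrete_topology UNIV) (\<lambda>x. int n * \<phi> x)"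
    using assms by (rule continuous_map_discrete_comp)
  ultimately show ?case using Suc assms by (simp add: normalized_add)
qed (simp add: normalized_zero)

lemma normalized_int_mult:
  assumes \<phi>: "continuous_map X (discrete_topology UNIV) \<phi>"
  shows "normalized (\<lambda>x. n * \<phi> x) = normalized \<phi> powi n"
proof (cases "n \<ge> 0")
  case True
  then show ?thesis using normalized_of_nat_mult[OF \<phi>, of "nat n"] by (simp add: power_int_def)
next
  case False
  define m where "m = nat (- n)"
  then have n: "n = - int m" using False by simp
  have "continuous_map X (discrete_topology UNIV) (\<lambda>x. n * \<phi> x)"
    and "continuous_map X (discrete_topology UNIV) (\<lambda>x. int m * \<phi> x)"
    using \<phi> by (auto intro: continuous_map_discrete_comp)
  then have "normalized (\<lambda>x. n * \<phi> x) * normalized (\<lambda>x. int m * \<phi> x) =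
      normalized (\<lambda>x. n * \<phi> x + int m * \<phi> x)"
    by (simp add: normalized_add)
  then have "normalized (\<lambda>x. n * \<phi> x) * normalized \<phi> ^ m = 1"
    by (simp add: n normalized_of_nat_mult[OF \<phi>] normalized_zero)
  then show ?thesis
    by (simp add: n power_int_minus) (metis inverse_unique mult.commute)
qed

lemma normalized_sum:
  assumes "finite A" "\<And>a. a \<in> A \<Longrightarrow> continuous_map X (discrete_topology UNIV) (k a)"
  shows "normalized (\<lambda>x. \<Sum>a\<in>A. k a x) = (\<Prod>a\<in>A. normalized (k a))"
  using assms
proof (induction A rule: finite_induct)
  case (insert a A)
  then show ?case
    by (simp add: normalized_add continuous_map_discrete_sum)
qed (simp add: normalized_zero)

lemma normalized_near_one:
  obtains F where "finite F" "F \<subseteq> topspace X"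
    "\<And>\<phi>. continuous_map X (discrete_topology UNIV) \<phi> \<Longrightarrow> \<forall>x\<in>F. \<phi> x = 0 \<Longrightarrow>
       norm (normalized \<phi> - 1) < 1/2"
proof -
  let ?U = "{f \<in> topspace (Cp_int X). chi f \<in> sphere 0 1 \<inter> ball chi_zero (1/2)}"
  have "openin (Cp_int X) ?U"
    using is_character unfolding is_character_def
    by (blast intro: openin_continuous_map_preimage)
  moreover have "restrict (\<lambda>_. 0) (topspace X) \<in> ?U"
    using norm_chi_zero by (simp add: chi_zero_def restrict_in_topspace_Cp_int)
  ultimately obtain F where F: "finite F" "F \<subseteq> topspace X"
    and agree: "\<And>g. g \<in> topspace (Cp_int X) \<Longrightarrow> \<forall>x\<in>F. g x = restrict (\<lambda>_. 0) (topspace X) x \<Longrightarrow> g \<in> ?U"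
    by (rule openin_Cp_int_agree_on_finite) simp_all
  show thesis
  proof (rule that[OF F])
    fix \<phi> :: "'a \<Rightarrow> int"
    assume \<phi>: "continuous_map X (discrete_topology UNIV) \<phi>" "\<forall>x\<in>F. \<phi> x = 0"
    then have "restrict \<phi> (topspace X) \<in> ?U"
      using F(2) by (intro agree restrict_in_topspace_Cp_int) auto
    then have "norm (chi (restrict \<phi> (topspace X)) - chi_zero) < 1/2"
      by (simp add: dist_norm norm_minus_commute)
    moreover have "normalized \<phi> - 1 = (chi (restrict \<phi> (topspace X)) - chi_zero) / chi_zero"
      using norm_chi_zero by (auto simp: normalized_def diff_divide_distrib)
    ultimately show "norm (normalized \<phi> - 1) < 1/2"
      using norm_chi_zero by (simp add: norm_divide)
  qed
qed

lemma normalized_finite_support: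
  obtains F where "finite F" "F \<subseteq> topspace X"
    "\<And>\<phi> \<psi>. continuous_map X (discrete_topology UNIV) \<phi> \<Longrightarrow>
       continuous_map X (discrete_topology UNIV) \<psi> \<Longrightarrow> \<forall>x\<in>F. \<phi> x = \<psi> x \<Longrightarrow>
       normalized \<phi> = normalized \<psi>"
proof -
  obtain F where F: "finite F" "F \<subseteq> topspace X" and near: "\<And>\<phi>.
      continuous_map X (discrete_topology UNIV) \<phi> \<Longrightarrow> \<forall>x\<in>F. \<phi> x = 0 \<Longrightarrow>
      norm (normalized \<phi> - 1) < 1/2"
    using normalized_near_one by blast
  show thesis
  proof (rule that[OF F])
    fix \<phi> \<psi> :: "'a \<Rightarrow> int"
    assume \<phi>: "continuous_map X (discrete_topology UNIV) \<phi>"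
      and \<psi>: "continuous_map X (discrete_topology UNIV) \<psi>" and eq: "\<forall>x\<in>F. \<phi> x = \<psi> x"
    define \<delta> where "\<delta> = (\<lambda>x. \<phi> x - \<psi> x)"
    have \<delta>: "continuous_map X (discrete_topology UNIV) \<delta>"
      unfolding \<delta>_def using \<phi> \<psi> by (rule continuous_map_discrete_combine)
    have "\<forall>x\<in>F. \<delta> x = 0" using eq by (simp add: \<delta>_def)
    have "norm (normalized \<delta> ^ n - 1) < 1/2" for n
    proof -
      have "continuous_map X (discrete_topology UNIV) (\<lambda>x. int n * \<delta> x)"
        using \<delta> by (rule continuous_map_discrete_comp)
      then show ?thesis
        using near[of "\<lambda>x. int n * \<delta> x"] \<open>\<forall>x\<in>F. \<delta> x = 0\<close>
        by (simp add: normalized_of_nat_mult[OF \<delta>])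
    qed
    then have "normalized \<delta> = 1" by (rule eq_one_if_powers_near_one)
    moreover have "\<phi> = (\<lambda>x. \<psi> x + \<delta> x)" by (simp add: \<delta>_def)
    ultimately show "normalized \<phi> = normalized \<psi>" using \<psi> \<delta> by (simp add: normalized_add)
  qed
qed

lemma normalized_exp_sum:
  assumes "zero_dimensional X" "t1_space X"
  obtains F \<theta> where "finite F" "F \<subseteq> topspace X"
    "\<And>\<phi>. continuous_map X (discrete_topology UNIV) \<phi> \<Longrightarrow>
       normalized \<phi> = exp (\<i> * of_real (\<Sum>x\<in>F. \<theta> x * real_of_int (\<phi> x)))"
proof -
  obtain F where F: "finite F" "F \<subseteq> topspace X" and support: "\<And>\<phi> \<psi>.
      continuous_map X (discrete_topology UNIV) \<phi> \<Longrightarrow>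
      continuous_map X (discrete_topology UNIV) \<psi> \<Longrightarrow> \<forall>x\<in>F. \<phi> x = \<psi> x \<Longrightarrow>
      normalized \<phi> = normalized \<psi>"
    using normalized_finite_support by blast
  obtain e :: "'a \<Rightarrow> 'a \<Rightarrow> int"
    where e: "\<And>x. x \<in> F \<Longrightarrow> continuous_map X (discrete_topology UNIV) (e x)"
      and e_diag: "\<And>x. x \<in> F \<Longrightarrow> e x x = 1"
      and e_off: "\<And>x y. x \<in> F \<Longrightarrow> y \<in> F \<Longrightarrow> y \<noteq> x \<Longrightarrow> e x y = 0"
    using zero_dimensional_isolating_indicators[OF assms F] by blast
  define \<theta> where "\<theta> x = Arg (normalized (e x))" for x
  have normalized_e: "normalized (e x) = exp (\<i> * of_real (\<theta> x))" if "x \<in> F" for x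
    using norm_normalized[OF e[OF that]] complex_norm_eq_1_exp_eq by (simp add: \<theta>_def)
  show thesis
  proof (rule that[OF F])
    fix \<phi> :: "'a \<Rightarrow> int"
    assume \<phi>: "continuous_map X (discrete_topology UNIV) \<phi>"
    have scaled_e: "continuous_map X (discrete_topology UNIV) (\<lambda>y. \<phi> x * e x y)" if "x \<in> F" for x
      using e[OF that] by (rule continuous_map_discrete_comp)
    define g where "g y = (\<Sum>x\<in>F. \<phi> x * e x y)" for y
    have g: "continuous_map X (discrete_topology UNIV) g"
      unfolding g_def using F(1) scaled_e by (rule continuous_map_discrete_sum)
    have "g y = \<phi> y" if "y \<in> F" for y
    proof -
      have "g y = \<phi> y * e y y + (\<Sum>x\<in>F - {y}. \<phi> x * e x y)"
        unfolding g_def using F(1) that by (simp add: sum.remove)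
      moreover have "(\<Sum>x\<in>F - {y}. \<phi> x * e x y) = 0"
        using that e_off by (intro sum.neutral) auto
      ultimately show ?thesis using that e_diag by simp
    qed
    then have "normalized \<phi> = normalized g" using support[OF \<phi> g] by simp
    also have "\<dots> = (\<Prod>x\<in>F. normalized (e x) powi \<phi> x)"
      unfolding g_def using F(1) scaled_e by (simp add: normalized_sum normalized_int_mult e)
    also have "\<dots> = (\<Prod>x\<in>F. exp (\<i> * of_real (\<theta> x * real_of_int (\<phi> x))))"
      by (intro prod.cong) (simp_all add: normalized_e exp_power_int mult_ac)
    also have "\<dots> = exp (\<i> * of_real (\<Sum>x\<in>F. \<theta> x * real_of_int (\<phi> x)))"
      using F(1) by (simp add: exp_sum sum_distrib_left)
    finally show "normalized \<phi> = exp (\<i> * of_real (\<Sum>x\<in>F. \<theta> x * real_of_int (\<phi> x)))" .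
  qed
qed

lemma chi_zero_eq_one:
  assumes "topspace X = UNIV \<or> (undefined::int) = 0"
  shows "chi_zero = 1"
proof -
  let ?z = "restrict (\<lambda>_. 0::int) (topspace X)"
  have "(\<lambda>x. ?z x + ?z x) = ?z" using assms by auto
  moreover have z: "?z \<in> topspace (Cp_int X)" by (simp add: restrict_in_topspace_Cp_int)
  ultimately have "chi_zero * chi_zero = chi_zero"
    unfolding chi_zero_def using chi_add[OF z z] by simp
  then show ?thesis using norm_chi_zero by auto
qed

text \<open>If \<^term>\<open>chi_zero \<noteq> 1\<close>, every element of \<^term>\<open>Cp_int X\<close> takes the same nonzero
  junk value at some point \<open>x\<^sub>0\<close> outside \<^term>\<open>topspace X\<close>; a coefficient at \<open>x\<^sub>0\<close>
  absorbs the phase \<^term>\<open>chi_zero\<close>.\<close>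

lemma chi_exp_sum:
  assumes "zero_dimensional X" "t1_space X"
  obtains F \<theta> where "finite F"
    "\<And>f. f \<in> topspace (Cp_int X) \<Longrightarrow> chi f = exp (\<i> * of_real (\<Sum>x\<in>F. \<theta> x * real_of_int (f x)))"
proof -
  obtain F \<theta> where F: "finite F" "F \<subseteq> topspace X" and normalized_eq: "\<And>\<phi>.
      continuous_map X (discrete_topology UNIV) \<phi> \<Longrightarrow>
      normalized \<phi> = exp (\<i> * of_real (\<Sum>x\<in>F. \<theta> x * real_of_int (\<phi> x)))"
    using normalized_exp_sum[OF assms] by blast
  have chi_eq: "chi f = chi_zero * exp (\<i> * of_real (\<Sum>x\<in>F. \<theta> x * real_of_int (f x)))"
    if "f \<in> topspace (Cp_int X)" for f
  proof -
    have "chi f = chi_zero * normalized f"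
      using that norm_chi_zero by (auto simp: topspace_Cp_int normalized_def extensional_restrict)
    then show ?thesis using that normalized_eq[of f] by (simp add: topspace_Cp_int)
  qed
  show thesis
  proof (cases "chi_zero = 1")
    case True
    then show ?thesis using that[OF F(1)] chi_eq by simp
  next
    case False
    then obtain x0 where x0: "x0 \<notin> topspace X" and junk: "(undefined::int) \<noteq> 0"
      using chi_zero_eq_one by blast
    define \<theta>' where "\<theta>' = \<theta>(x0 := Arg chi_zero / real_of_int undefined)"
    have "chi f = exp (\<i> * of_real (\<Sum>x\<in>insert x0 F. \<theta>' x * real_of_int (f x)))"
      if "f \<in> topspace (Cp_int X)" for f
    proof -
      have "f x0 = undefined" using that x0 by (auto simp: topspace_Cp_int extensional_def)
      then have "\<theta>' x0 * real_of_int (f x0) = Arg chi_zero" using junk by (simp add: \<theta>'_def)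
      moreover have "(\<Sum>x\<in>F. \<theta>' x * real_of_int (f x)) = (\<Sum>x\<in>F. \<theta> x * real_of_int (f x))"
        using F(2) x0 by (intro sum.cong) (auto simp: \<theta>'_def)
      moreover have "exp (\<i> * of_real (Arg chi_zero)) = chi_zero"
        using norm_chi_zero complex_norm_eq_1_exp_eq by blast
      moreover have "x0 \<notin> F" using F(2) x0 by blast
      ultimately have "(\<Sum>x\<in>insert x0 F. \<theta>' x * real_of_int (f x)) =
          Arg chi_zero + (\<Sum>x\<in>F. \<theta> x * real_of_int (f x))"
        using F(1) by simp
      then show ?thesis
        using chi_eq[OF that] \<open>exp (\<i> * of_real (Arg chi_zero)) = chi_zero\<close>
        by (simp only: of_real_add distrib_left exp_add)
    qed
    then show ?thesis using that[of "insert x0 F"] F(1) by blast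
  qed
qed

end

theorem proposition6p2:
  fixes X :: "'a topology" and I :: "'i set" and chi :: "('a \<Rightarrow> int) \<Rightarrow> complex"
  assumes "tikhonov_space X"
    and "zero_dimensional X"
    and "N_compact_idx X I"
    and "nonmeasurable_card (topspace X)"
    and "is_character (Cp_int X) chi"
  shows "\<exists>psi :: ('a \<Rightarrow> real) \<Rightarrow> complex. is_character (Cp_real X) psi \<and>
           (\<forall>f\<in>topspace (Cp_int X). psi (\<lambda>x. real_of_int (f x)) = chi f)"
proof -
  interpret Cp_int_character X chi by unfold_locales (fact assms(5))
  have "t1_space X"
    using assms(1) by (simp add: tikhonov_space_def Hausdorff_imp_t1_space)
  then obtain F \<theta> where "finite F"
    and chi: "\<And>f. f \<in> topspace (Cp_int X) \<Longrightarrow>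
                 chi f = exp (\<i> * of_real (\<Sum>x\<in>F. \<theta> x * real_of_int (f x)))"
    using chi_exp_sum[OF assms(2)] by blast
  then show ?thesis
    using is_character_Cp_real_exp_sum[OF \<open>finite F\<close>, of X \<theta>] by auto
qed

end
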